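(* Let $V^{(t+1)}=V^{(t)}-\alpha_t\nabla L_t$ with $\alpha_t>0$. If $\alpha_tL_t\le\frac{1}{30p}$, then \[ L_{t+1}\le L_t-\frac{5\alpha_t\lVert\nabla L_t\rVert^2}{6}. \]
   Context: Standing assumption: $h=1/p$ with $p\ge1$. Huberized ReLU: $\phi(z)=0$ for $z<0$, $z^2/(2h)$ for $z\in[0,h]$, $z-h/2$ for $z>h$. Data $(x_1,y_1),\ldots,(x_n,y_n)$ with $x_s\in\mathbb{R}^{d+1}$, $\lVert x_s\rVert=1$, $y_s\in\{-1,1\}$. For $V\in\mathbb{R}^{2p\times(d+1)}$ with rows $v_1,\ldots,v_{2p}$ and fixed $u_1=\cdots=u_p=1$, $u_{p+1}=\cdots=u_{2p}=-1$: $f_V(x)=\sum_{i=1}^{2p}u_i\phi(v_i\cdot x)$, $L(V)=\frac1n\sum_s\ln(1+\exp(-y_sf_V(x_s)))$. $L_t=L(V^{(t)})$, $\nabla L_t=\nabla_VL|_{V=V^{(t)}}$, and $\lVert\cdot\rVert$ is the Frobenius norm. *)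

theory Defs
  imports "HOL-Analysis.Analysis"
begin

definition hrelu :: "real \<Rightarrow> real \<Rightarrow> real" where
  "hrelu h z = (if z < 0 then 0 else if z \<le> h then z^2 / (2*h) else z - h/2)"

text \<open>Weight matrices: rows indexed by ('k \<times> bool), where CARD('k) = p.
  Rows (i, True) carry output weight u = 1, rows (i, False) carry u = -1,
  so there are 2p rows, p with u = 1 and p with u = -1.  Each row lies in
  real^'d (= R^(d+1)).  The Euclidean norm on real^'d^('k\<times>bool) is the
  Frobenius norm, and the inner product is the Frobenius inner product.\<close>
definition uw :: "'k \<times> bool \<Rightarrow> real" where
  "uw i = (if snd i then 1 else -1)"

definition hh :: "'k::finite itself \<Rightarrow> real" where
  "hh _ = 1 / real CARD('k)"

definition fnet :: "real^'d^('k::finite \<times> bool) \<Rightarrow> real^'d \<Rightarrow> real" where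
  "fnet V x = (\<Sum>i\<in>UNIV. uw i * hrelu (hh TYPE('k)) ((V $ i) \<bullet> x))"

definition loss :: "nat \<Rightarrow> (nat \<Rightarrow> real^'d) \<Rightarrow> (nat \<Rightarrow> real)
                    \<Rightarrow> real^'d^('k::finite \<times> bool) \<Rightarrow> real" where
  "loss n x y V = (1 / real n) * (\<Sum>s<n. ln (1 + exp (- (y s) * fnet V (x s))))"

definition grad :: "('a::real_inner \<Rightarrow> real) \<Rightarrow> 'a \<Rightarrow> 'a" where
  "grad F V = (THE G. (F has_derivative (\<lambda>H. G \<bullet> H)) (at V))"

end

(*
  The loss is the mean of the logistic loss l(t) = ln (1 + exp (-t)) over the margins
  y_s f_V(x_s).  Its negative derivative w = -l' is dominated by l itself, and
  l(t + d) <= l(t) + w(t) (d^2 - d) for |d| <= 1.  The Huberized ReLU has derivative in [0, 1]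
  and a (1/h)-Lipschitz derivative, so every margin is sqrt(2p)-Lipschitz in V and differs from
  its linearisation by at most (p/2) |V' - V|^2.  Together these give a local smoothness
  estimate whose constant is proportional to the loss:
    L(V') <= L(V) + grad L(V) . (V' - V) + (5/2) p L(V) |V' - V|^2   when 2p |V' - V|^2 <= 1,
  as well as |grad L(V)| <= sqrt(2p) L(V).  For V' = V - alpha grad L(V) with alpha p L(V) <= 1/30
  the step is small enough, and the quadratic term costs at most alpha |grad L(V)|^2 / 12.
*)
theory Submission
  imports Defs
begin

section \<open>The Huberized ReLU\<close>

definition hrelu_deriv :: "real \<Rightarrow> real \<Rightarrow> real" where
  "hrelu_deriv h z = (max 0 z - max 0 (z - h)) / h"

text \<open>This reduces the Taylor estimate for the Huberized ReLU to the much simpler one for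
  \<open>z \<mapsto> (max 0 z)\<^sup>2\<close>: both Taylor remainders lie in \<open>[0, (b - a)\<^sup>2]\<close>, so they cancel up to
  \<open>(b - a)\<^sup>2\<close>.\<close>
lemma hrelu_eq_max0_sq:
  assumes "h > 0"
  shows "hrelu h z = ((max 0 z)^2 - (max 0 (z - h))^2) / (2 * h)"
  using assms by (auto simp: hrelu_def field_simps power2_eq_square)

lemma hrelu_deriv_bounds:
  assumes "h > 0"
  shows "0 \<le> hrelu_deriv h z" and "hrelu_deriv h z \<le> 1"
  using assms by (auto simp: hrelu_deriv_def field_simps)

lemma max0_sq_taylor:
  fixes a b :: real
  shows "0 \<le> (max 0 b)^2 - (max 0 a)^2 - 2 * max 0 a * (b - a)"
    and "(max 0 b)^2 - (max 0 a)^2 - 2 * max 0 a * (b - a) \<le> (b - a)^2"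
proof -
  have "a * b \<le> 0 \<and> 0 \<le> a * a" if "a \<ge> 0 \<and> b < 0 \<or> a < 0 \<and> b \<ge> 0"
    using that by (auto simp: mult_nonneg_nonpos mult_nonpos_nonneg)
  then have "0 \<le> (max 0 b)^2 - (max 0 a)^2 - 2 * max 0 a * (b - a) \<and>
      (max 0 b)^2 - (max 0 a)^2 - 2 * max 0 a * (b - a) \<le> (b - a)^2"
    using zero_le_square[of "a - b"]
    by (cases "a \<ge> 0"; cases "b \<ge> 0")
      (auto simp: power2_eq_square algebra_simps intro: order_trans[of _ 0])
  then show "0 \<le> (max 0 b)^2 - (max 0 a)^2 - 2 * max 0 a * (b - a)"
    and "(max 0 b)^2 - (max 0 a)^2 - 2 * max 0 a * (b - a) \<le> (b - a)^2"
    by auto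
qed

lemma hrelu_taylor:
  assumes "h > 0"
  shows "\<bar>hrelu h b - hrelu h a - hrelu_deriv h a * (b - a)\<bar> \<le> (b - a)^2 / (2 * h)"
proof -
  define R where "R u v = (max 0 v)^2 - (max 0 u)^2 - 2 * max 0 u * (v - u)" for u v :: real
  have "hrelu h b - hrelu h a - hrelu_deriv h a * (b - a) = (R a b - R (a - h) (b - h)) / (2 * h)"
    using assms by (simp add: hrelu_eq_max0_sq hrelu_deriv_def R_def field_simps)
  moreover have "\<bar>R a b - R (a - h) (b - h)\<bar> \<le> (b - a)^2"
    using max0_sq_taylor[where a = a and b = b] max0_sq_taylor[where a = "a - h" and b = "b - h"]
    unfolding R_def abs_le_iff by auto
  ultimately show ?thesis
    using assms by (simp add: abs_divide divide_right_mono)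
qed

lemma quadratic_remainder_imp_has_real_derivative:
  fixes f :: "real \<Rightarrow> real"
  assumes "\<And>w. \<bar>f w - f z - c * (w - z)\<bar> \<le> K * (w - z)^2"
  shows "(f has_real_derivative c) (at z)"
proof -
  have "((\<lambda>w. (f w - f z) / (w - z) - c) \<longlongrightarrow> 0) (at z)"
  proof (rule Lim_null_comparison)
    have "\<forall>\<^sub>F w in at z. w \<noteq> z"
      by (simp add: eventually_at_filter)
    then show "\<forall>\<^sub>F w in at z. norm ((f w - f z) / (w - z) - c) \<le> K * \<bar>w - z\<bar>"
    proof (rule eventually_mono)
      fix w assume "w \<noteq> z"
      then have "(f w - f z) / (w - z) - c = (f w - f z - c * (w - z)) / (w - z)"
        by (simp add: field_simps)
      also have "\<bar>\<dots>\<bar> \<le> K * (w - z)^2 / \<bar>w - z\<bar>"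
        unfolding abs_divide by (intro divide_right_mono assms) simp
      also have "\<dots> = K * \<bar>w - z\<bar>"
        using \<open>w \<noteq> z\<close> unfolding power2_abs[of "w - z", symmetric]
        by (simp add: power2_eq_square del: abs_mult_self_eq)
      finally show "norm ((f w - f z) / (w - z) - c) \<le> K * \<bar>w - z\<bar>" by simp
    qed
    have "((\<lambda>w. K * \<bar>w - z\<bar>) \<longlongrightarrow> K * \<bar>z - z\<bar>) (at z)"
      by (intro tendsto_intros)
    then show "((\<lambda>w. K * \<bar>w - z\<bar>) \<longlongrightarrow> 0) (at z)" by simp
  qed
  then show ?thesis by (simp add: has_field_derivative_iff LIM_zero_iff)
qed

lemma hrelu_has_real_derivative:
  assumes "h > 0"
  shows "(hrelu h has_real_derivative hrelu_deriv h z) (at z)"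
  using hrelu_taylor[OF assms]
  by (intro quadratic_remainder_imp_has_real_derivative[where K = "1 / (2 * h)"]) simp

lemma hrelu_lipschitz:
  assumes "h > 0"
  shows "\<bar>hrelu h b - hrelu h a\<bar> \<le> \<bar>b - a\<bar>"
  using field_differentiable_bound[of UNIV "hrelu h" "hrelu_deriv h" 1 b a]
    hrelu_has_real_derivative[OF assms] hrelu_deriv_bounds[OF assms]
  by (simp add: has_field_derivative_at_within)

section \<open>The logistic loss\<close>

definition logistic_loss :: "real \<Rightarrow> real" where
  "logistic_loss t = ln (1 + exp (- t))"

definition logistic_weight :: "real \<Rightarrow> real" where
  "logistic_weight t = 1 / (1 + exp t)"

lemma logistic_weight_pos: "0 < logistic_weight t"
  by (simp add: logistic_weight_def add_pos_pos)

lemma logistic_weight_eq: "logistic_weight t = exp (- t) / (1 + exp (- t))"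
  by (simp add: logistic_weight_def exp_minus field_simps add_pos_pos)

lemma logistic_loss_has_real_derivative:
  "(logistic_loss has_real_derivative - logistic_weight t) (at t)"
  unfolding logistic_loss_def logistic_weight_eq
  by (auto intro!: derivative_eq_intros simp: add_pos_pos)

lemma logistic_weight_le_loss: "logistic_weight t \<le> logistic_loss t"
proof -
  have pos: "0 < 1 + exp (- t)" by (simp add: add_pos_pos)
  have "- logistic_loss t = ln (1 / (1 + exp (- t)))"
    using pos by (simp add: logistic_loss_def ln_div)
  also have "\<dots> \<le> 1 / (1 + exp (- t)) - 1"
    using pos by (intro ln_le_minus_one) simp
  also have "\<dots> = - logistic_weight t"
    using pos by (simp add: logistic_weight_eq field_simps)
  finally show ?thesis by simp
qed

lemma logistic_loss_pos: "0 < logistic_loss t"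
  using logistic_weight_pos logistic_weight_le_loss by (rule less_le_trans)

lemma exp_le_quadratic:
  fixes u :: real
  assumes "\<bar>u\<bar> \<le> 1"
  shows "exp u \<le> 1 + u + u^2"
proof (cases "u \<ge> 0")
  case True
  then show ?thesis using exp_bound[of u] assms by simp
next
  case False
  have "(1 + u + u^2) * (1 - u) = 1 - u^3"
    by (simp add: power2_eq_square power3_eq_cube algebra_simps)
  also have "\<dots> \<ge> 1" using False by simp
  finally have "1 / (1 - u) \<le> 1 + u + u^2"
    using False by (simp add: divide_le_eq)
  moreover have "exp u \<le> 1 / (1 - u)"
    using exp_ge_add_one_self[of "- u"] False by (simp add: exp_minus field_simps)
  ultimately show ?thesis by linarith
qed

lemma logistic_loss_step:
  assumes "\<bar>d\<bar> \<le> 1"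
  shows "logistic_loss (t + d) \<le> logistic_loss t + logistic_weight t * (- d + d^2)"
proof -
  have pos: "0 < 1 + exp (- t)" "0 < 1 + exp (- t) * exp (- d)"
    by (simp_all add: add_pos_pos)
  have "logistic_loss (t + d) - logistic_loss t = ln ((1 + exp (- t) * exp (- d)) / (1 + exp (- t)))"
    using pos by (simp add: logistic_loss_def ln_div flip: exp_add)
  also have "\<dots> \<le> (1 + exp (- t) * exp (- d)) / (1 + exp (- t)) - 1"
    using pos by (intro ln_le_minus_one) simp
  also have "\<dots> = logistic_weight t * (exp (- d) - 1)"
    using pos by (simp add: logistic_weight_eq field_simps)
  also have "\<dots> \<le> logistic_weight t * (- d + d^2)"
    using exp_le_quadratic[of "- d"] assms logistic_weight_pos[of t]
    by (intro mult_left_mono) auto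
  finally show ?thesis by simp
qed

section \<open>The network and its empirical loss\<close>

lemma has_derivative_grad:
  fixes F :: "'a::euclidean_space \<Rightarrow> real"
  assumes "(F has_derivative D) (at V)"
  shows "D H = grad F V \<bullet> H"
proof -
  have "linear D" using assms by (rule has_derivative_linear)
  define G where "G = adjoint D 1"
  have D_eq: "D = (\<lambda>H. G \<bullet> H)"
    using adjoint_works[OF \<open>linear D\<close>, of _ 1] by (simp add: G_def inner_commute fun_eq_iff)
  have "grad F V = G"
    unfolding grad_def
  proof (rule the_equality)
    show "(F has_derivative (\<lambda>H. G \<bullet> H)) (at V)" using assms D_eq by simp
  next
    fix G' assume "(F has_derivative (\<lambda>H. G' \<bullet> H)) (at V)"
    then have "(\<lambda>H. G' \<bullet> H) = (\<lambda>H. G \<bullet> H)"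
      using assms D_eq has_derivative_unique by blast
    then have "(G' - G) \<bullet> (G' - G) = 0"
      by (metis inner_diff_left right_minus_eq)
    then show "G' = G" by simp
  qed
  then show ?thesis using D_eq by simp
qed

lemma hh_pos: "hh TYPE('k::finite) > 0"
  by (simp add: hh_def)

lemma abs_sum_uw_le: "\<bar>\<Sum>i\<in>UNIV. uw i * g i\<bar> \<le> (\<Sum>i\<in>UNIV. \<bar>g i\<bar>)"
proof -
  have abs_uw: "\<bar>uw i\<bar> = 1" for i by (simp add: uw_def)
  show ?thesis using sum_abs[of "\<lambda>i. uw i * g i" UNIV] by (simp add: abs_mult abs_uw)
qed

lemma abs_inner_unit_le:
  fixes v x :: "'a::real_inner"
  assumes "norm x = 1"
  shows "\<bar>v \<bullet> x\<bar> \<le> norm v"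
  using Cauchy_Schwarz_ineq2[of v x] assms by simp

lemma power2_norm_vec_eq_sum:
  fixes H :: "'a::real_inner^'n"
  shows "(norm H)^2 = (\<Sum>i\<in>UNIV. (norm (H $ i))^2)"
  by (simp add: power2_norm_eq_inner inner_vec_def)

lemma sum_norm_rows_le:
  fixes H :: "real^'n^'m::finite"
  shows "(\<Sum>i\<in>UNIV. norm (H $ i)) \<le> sqrt (real CARD('m)) * norm H"
proof (rule real_le_rsqrt[THEN order_trans])
  show "(\<Sum>i\<in>UNIV. norm (H $ i))^2 \<le> real CARD('m) * (norm H)^2"
    using sum_squared_le_sum_of_squares[of "\<lambda>i. norm (H $ i)" UNIV]
    by (simp add: power2_norm_vec_eq_sum[of H] mult.commute)
  show "sqrt (real CARD('m) * (norm H)^2) \<le> sqrt (real CARD('m)) * norm H"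
    by (simp add: real_sqrt_mult)
qed

definition fnet_deriv ::
    "real^'d^('k::finite \<times> bool) \<Rightarrow> real^'d \<Rightarrow> real^'d^('k \<times> bool) \<Rightarrow> real" where
  "fnet_deriv V x H =
    (\<Sum>i\<in>UNIV. uw i * (hrelu_deriv (hh TYPE('k)) (V $ i \<bullet> x) * (H $ i \<bullet> x)))"

lemma fnet_has_derivative:
  fixes V :: "real^'d^('k::finite \<times> bool)"
  shows "((\<lambda>V. fnet V x) has_derivative fnet_deriv V x) (at V)"
proof -
  have row: "((\<lambda>V::real^'d^('k \<times> bool). V $ i \<bullet> x) has_derivative (\<lambda>H. H $ i \<bullet> x)) (at V)"
    for i
    by (intro bounded_linear_imp_has_derivative bounded_linear_compose[OF bounded_linear_inner_left]
        bounded_linear_vec_nth)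
  note hrelu' = hrelu_has_real_derivative[OF hh_pos[where 'k = 'k], unfolded has_field_derivative_def]
  have "((\<lambda>V::real^'d^('k \<times> bool). hrelu (hh TYPE('k)) (V $ i \<bullet> x)) has_derivative
      (\<lambda>H. hrelu_deriv (hh TYPE('k)) (V $ i \<bullet> x) * (H $ i \<bullet> x))) (at V)" for i
    using has_derivative_compose[OF row hrelu'] by simp
  then show ?thesis
    unfolding fnet_def fnet_deriv_def[abs_def]
    by (intro has_derivative_sum has_derivative_mult_right)
qed

lemma fnet_deriv_bound:
  fixes V H :: "real^'d^('k::finite \<times> bool)"
  assumes "norm x = 1"
  shows "\<bar>fnet_deriv V x H\<bar> \<le> sqrt (2 * real CARD('k)) * norm H"
proof -
  have "\<bar>fnet_deriv V x H\<bar> \<le> (\<Sum>i\<in>UNIV. norm (H $ i))"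
    unfolding fnet_deriv_def
  proof (rule order_trans[OF abs_sum_uw_le sum_mono])
    fix i
    have "\<bar>hrelu_deriv (hh TYPE('k)) (V $ i \<bullet> x)\<bar> * \<bar>H $ i \<bullet> x\<bar> \<le> 1 * norm (H $ i)"
      using hrelu_deriv_bounds[OF hh_pos[where 'k = 'k]] abs_inner_unit_le[OF assms]
      by (intro mult_mono) auto
    then show "\<bar>hrelu_deriv (hh TYPE('k)) (V $ i \<bullet> x) * (H $ i \<bullet> x)\<bar> \<le> norm (H $ i)"
      by (simp add: abs_mult)
  qed
  also have "\<dots> \<le> sqrt (2 * real CARD('k)) * norm H"
    using sum_norm_rows_le[of H] by (simp add: mult.commute)
  finally show ?thesis .
qed

lemma fnet_lipschitz:
  fixes V0 V1 :: "real^'d^('k::finite \<times> bool)"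
  assumes "norm x = 1"
  shows "\<bar>fnet V1 x - fnet V0 x\<bar> \<le> sqrt (2 * real CARD('k)) * norm (V1 - V0)"
proof -
  define h where "h = hh TYPE('k)"
  have "\<bar>fnet V1 x - fnet V0 x\<bar> =
      \<bar>\<Sum>i\<in>UNIV. uw i * (hrelu h (V1 $ i \<bullet> x) - hrelu h (V0 $ i \<bullet> x))\<bar>"
    by (simp add: fnet_def h_def sum_subtractf algebra_simps)
  also have "\<dots> \<le> (\<Sum>i\<in>UNIV. norm ((V1 - V0) $ i))"
  proof (rule order_trans[OF abs_sum_uw_le sum_mono])
    fix i
    have "\<bar>hrelu h (V1 $ i \<bullet> x) - hrelu h (V0 $ i \<bullet> x)\<bar> \<le> \<bar>(V1 - V0) $ i \<bullet> x\<bar>"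
      using hrelu_lipschitz[OF hh_pos[where 'k = 'k]] by (simp add: h_def inner_diff_left)
    also have "\<dots> \<le> norm ((V1 - V0) $ i)"
      by (rule abs_inner_unit_le[OF assms])
    finally show "\<bar>hrelu h (V1 $ i \<bullet> x) - hrelu h (V0 $ i \<bullet> x)\<bar> \<le> norm ((V1 - V0) $ i)" .
  qed
  also have "\<dots> \<le> sqrt (2 * real CARD('k)) * norm (V1 - V0)"
    using sum_norm_rows_le[of "V1 - V0"] by (simp add: mult.commute)
  finally show ?thesis .
qed

lemma fnet_taylor:
  fixes V0 V1 :: "real^'d^('k::finite \<times> bool)"
  assumes "norm x = 1"
  shows "\<bar>fnet V1 x - fnet V0 x - fnet_deriv V0 x (V1 - V0)\<bar>
    \<le> real CARD('k) / 2 * (norm (V1 - V0))^2"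
proof -
  define h where "h = hh TYPE('k)"
  have "h > 0" by (simp add: h_def hh_pos)
  define a b where "a i = V0 $ i \<bullet> x" and "b i = V1 $ i \<bullet> x" for i
  have "fnet V1 x - fnet V0 x - fnet_deriv V0 x (V1 - V0) =
      (\<Sum>i\<in>UNIV. uw i * (hrelu h (b i) - hrelu h (a i) - hrelu_deriv h (a i) * (b i - a i)))"
    unfolding fnet_def fnet_deriv_def h_def a_def b_def sum_subtractf[symmetric]
    by (intro sum.cong refl) (simp add: algebra_simps inner_diff_left)
  also have "\<bar>\<dots>\<bar> \<le> (\<Sum>i\<in>UNIV. (norm ((V1 - V0) $ i))^2 / (2 * h))"
  proof (rule order_trans[OF abs_sum_uw_le sum_mono])
    fix i
    have "\<bar>b i - a i\<bar> \<le> norm ((V1 - V0) $ i)"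
      using abs_inner_unit_le[OF assms, of "(V1 - V0) $ i"] by (simp add: a_def b_def inner_diff_left)
    then have "(b i - a i)^2 \<le> (norm ((V1 - V0) $ i))^2"
      by (metis abs_ge_zero power2_abs power_mono)
    with hrelu_taylor[OF \<open>h > 0\<close>, of "b i" "a i"] \<open>h > 0\<close>
    show "\<bar>hrelu h (b i) - hrelu h (a i) - hrelu_deriv h (a i) * (b i - a i)\<bar>
        \<le> (norm ((V1 - V0) $ i))^2 / (2 * h)"
      by (meson divide_right_mono order_trans less_imp_le zero_less_mult_iff zero_less_numeral)
  qed
  also have "\<dots> = real CARD('k) / 2 * (norm (V1 - V0))^2"
    unfolding power2_norm_vec_eq_sum[of "V1 - V0"]
    by (simp add: h_def hh_def sum_distrib_left mult.commute)
  finally show ?thesis .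
qed

lemma loss_eq_logistic: "loss n x y V = (1 / real n) * (\<Sum>s<n. logistic_loss (y s * fnet V (x s)))"
  by (simp add: loss_def logistic_loss_def)

lemma loss_has_derivative:
  fixes V :: "real^'d^('k::finite \<times> bool)"
  shows "(loss n x y has_derivative (\<lambda>H. (1 / real n) *
    (\<Sum>s<n. - logistic_weight (y s * fnet V (x s)) * (y s * fnet_deriv V (x s) H)))) (at V)"
proof -
  have "((\<lambda>V. logistic_loss (y s * fnet V (x s))) has_derivative
      (\<lambda>H. - logistic_weight (y s * fnet V (x s)) * (y s * fnet_deriv V (x s) H))) (at V)" for s
    using has_derivative_compose[OF has_derivative_mult_right[OF fnet_has_derivative]
        logistic_loss_has_real_derivative[unfolded has_field_derivative_def]]
    by simp
  then show ?thesis
    unfolding loss_eq_logistic[abs_def] by (intro has_derivative_mult_right has_derivative_sum)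
qed

lemma grad_loss_inner:
  fixes V H :: "real^'d^('k::finite \<times> bool)"
  shows "grad (loss n x y) V \<bullet> H = (1 / real n) *
    (\<Sum>s<n. - logistic_weight (y s * fnet V (x s)) * (y s * fnet_deriv V (x s) H))"
  using has_derivative_grad[OF loss_has_derivative[where n = n and x = x and y = y and V = V], of H]
  by simp

lemma mean_logistic_weight_le_loss:
  "(1 / real n) * (\<Sum>s<n. logistic_weight (y s * fnet V (x s))) \<le> loss n x y V"
  unfolding loss_eq_logistic by (intro mult_left_mono sum_mono logistic_weight_le_loss) simp_all

lemma loss_nonneg: "0 \<le> loss n x y V"
  unfolding loss_eq_logistic
  by (intro mult_nonneg_nonneg sum_nonneg) (simp_all add: less_imp_le logistic_loss_pos)

lemma norm_grad_loss_le:
  fixes V :: "real^'d^('k::finite \<times> bool)"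
  assumes "\<And>s. s < n \<Longrightarrow> norm (x s) = 1" and "\<And>s. s < n \<Longrightarrow> \<bar>y s\<bar> = 1"
  shows "norm (grad (loss n x y) V) \<le> sqrt (2 * real CARD('k)) * loss n x y V"
proof -
  define G where "G = grad (loss n x y) V"
  define w where "w s = logistic_weight (y s * fnet V (x s))" for s
  define c where "c = sqrt (2 * real CARD('k)) * norm G"
  have "norm G * norm G = G \<bullet> G"
    by (simp add: dot_square_norm power2_eq_square)
  also have "\<dots> = (1 / real n) * (\<Sum>s<n. - w s * (y s * fnet_deriv V (x s) G))"
    by (simp add: G_def w_def grad_loss_inner)
  also have "\<dots> \<le> (1 / real n) * (\<Sum>s<n. w s * c)"
  proof (intro mult_left_mono sum_mono)
    fix s assume "s \<in> {..<n}"
    then have "\<bar>y s * fnet_deriv V (x s) G\<bar> \<le> c"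
      using assms fnet_deriv_bound[of "x s" V G] by (simp add: abs_mult c_def)
    then have "- (y s * fnet_deriv V (x s) G) \<le> c" by linarith
    then show "- w s * (y s * fnet_deriv V (x s) G) \<le> w s * c"
      using mult_left_mono[OF _ less_imp_le[OF logistic_weight_pos]] unfolding w_def by fastforce
  qed simp
  also have "\<dots> = ((1 / real n) * (\<Sum>s<n. w s)) * c"
    by (simp add: sum_distrib_right)
  also have "\<dots> \<le> loss n x y V * c"
    unfolding w_def by (intro mult_right_mono mean_logistic_weight_le_loss) (simp add: c_def)
  finally have "norm G * norm G \<le> (sqrt (2 * real CARD('k)) * loss n x y V) * norm G"
    by (simp add: c_def ac_simps)
  then show ?thesis
    by (cases "norm G = 0") (simp_all add: G_def loss_nonneg)
qed

lemma gradient_step_admissible: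
  fixes V :: "real^'d^('k::finite \<times> bool)"
  assumes "\<And>s. s < n \<Longrightarrow> norm (x s) = 1" and "\<And>s. s < n \<Longrightarrow> \<bar>y s\<bar> = 1"
    and "0 \<le> \<alpha>" and "\<alpha> * real CARD('k) * loss n x y V \<le> 1 / 2"
  shows "2 * real CARD('k) * (norm (\<alpha> *\<^sub>R grad (loss n x y) V))^2 \<le> 1"
proof -
  define p L where "p = real CARD('k)" and "L = loss n x y V"
  have "norm (\<alpha> *\<^sub>R grad (loss n x y) V) \<le> \<alpha> * (sqrt (2 * p) * L)"
    using norm_grad_loss_le[OF assms(1,2), where V = V] assms(3) by (simp add: p_def L_def mult_left_mono)
  then have "(norm (\<alpha> *\<^sub>R grad (loss n x y) V))^2 \<le> (\<alpha> * (sqrt (2 * p) * L))^2"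
    by (metis norm_ge_zero power_mono)
  also have "\<dots> = (2 * (\<alpha> * p * L))^2 / (2 * p)"
    by (simp add: p_def power_mult_distrib power2_eq_square)
  also have "\<dots> \<le> 1 / (2 * p)"
    using assms(3,4) loss_nonneg[of n x y V]
    by (intro divide_right_mono power_le_one) (simp_all add: p_def L_def)
  finally show ?thesis by (simp add: p_def field_simps)
qed

lemma logistic_loss_margin_step:
  fixes V0 V1 :: "real^'d^('k::finite \<times> bool)"
  assumes "norm x = 1" and "\<bar>y\<bar> = 1" and "2 * real CARD('k) * (norm (V1 - V0))^2 \<le> 1"
  shows "logistic_loss (y * fnet V1 x) \<le> logistic_loss (y * fnet V0 x) +
    logistic_weight (y * fnet V0 x) *
      (- (y * fnet_deriv V0 x (V1 - V0)) + 5 / 2 * real CARD('k) * (norm (V1 - V0))^2)"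
proof -
  define d where "d = y * (fnet V1 x - fnet V0 x)"
  have "\<bar>d\<bar> \<le> sqrt (2 * real CARD('k)) * norm (V1 - V0)"
    using fnet_lipschitz[OF assms(1), of V1 V0] assms(2) by (simp add: d_def abs_mult)
  then have "d^2 \<le> (sqrt (2 * real CARD('k)) * norm (V1 - V0))^2"
    by (metis abs_ge_zero power2_abs power_mono)
  then have d_sq: "d^2 \<le> 2 * real CARD('k) * (norm (V1 - V0))^2"
    by (simp add: power_mult_distrib)
  then have "\<bar>d\<bar> \<le> 1"
    using assms(3) by (simp add: abs_le_square_iff[of d 1, simplified])
  then have loss_step: "logistic_loss (y * fnet V1 x) \<le>
      logistic_loss (y * fnet V0 x) + logistic_weight (y * fnet V0 x) * (- d + d^2)"
    using logistic_loss_step[of d "y * fnet V0 x"] by (simp add: d_def algebra_simps)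
  have "\<bar>y * (fnet V1 x - fnet V0 x - fnet_deriv V0 x (V1 - V0))\<bar> \<le>
      real CARD('k) / 2 * (norm (V1 - V0))^2"
    using fnet_taylor[OF assms(1), of V1 V0] assms(2) by (simp add: abs_mult)
  with d_sq have bound: "- d + d^2 \<le>
      - (y * fnet_deriv V0 x (V1 - V0)) + 5 / 2 * real CARD('k) * (norm (V1 - V0))^2"
    unfolding d_def right_diff_distrib by linarith
  show ?thesis
    using loss_step mult_left_mono[OF bound less_imp_le[OF logistic_weight_pos[of "y * fnet V0 x"]]]
    by linarith
qed

lemma loss_quadratic_upper_bound:
  fixes V0 V1 :: "real^'d^('k::finite \<times> bool)"
  assumes "\<And>s. s < n \<Longrightarrow> norm (x s) = 1" and "\<And>s. s < n \<Longrightarrow> \<bar>y s\<bar> = 1"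
    and "2 * real CARD('k) * (norm (V1 - V0))^2 \<le> 1"
  shows "loss n x y V1 \<le> loss n x y V0 + grad (loss n x y) V0 \<bullet> (V1 - V0) +
    5 / 2 * real CARD('k) * loss n x y V0 * (norm (V1 - V0))^2"
proof -
  define c where "c = 5 / 2 * real CARD('k) * (norm (V1 - V0))^2"
  define w where "w s = logistic_weight (y s * fnet V0 (x s))" for s
  have "loss n x y V1 \<le> (1 / real n) * (\<Sum>s<n. logistic_loss (y s * fnet V0 (x s)) +
      w s * (- (y s * fnet_deriv V0 (x s) (V1 - V0)) + c))"
    unfolding loss_eq_logistic w_def c_def
    using logistic_loss_margin_step[OF assms(1,2) assms(3)]
    by (intro mult_left_mono sum_mono) simp_all
  also have "\<dots> = loss n x y V0 + grad (loss n x y) V0 \<bullet> (V1 - V0) + ((1 / real n) * (\<Sum>s<n. w s)) * c"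
    unfolding loss_eq_logistic[of n x y V0] grad_loss_inner w_def
    by (simp add: sum.distrib sum_distrib_right right_diff_distrib sum_subtractf diff_divide_distrib
        add_divide_distrib sum_negf)
  also have "\<dots> \<le> loss n x y V0 + grad (loss n x y) V0 \<bullet> (V1 - V0) + loss n x y V0 * c"
    unfolding w_def c_def by (intro add_left_mono mult_right_mono mean_logistic_weight_le_loss) simp
  finally show ?thesis by (simp add: c_def ac_simps)
qed

theorem lemma4:
  fixes n :: nat and x :: "nat \<Rightarrow> real^'d" and y :: "nat \<Rightarrow> real"
    and V0 V1 :: "real^'d^('k::finite \<times> bool)" and \<alpha> :: real
  assumes "\<And>s. s < n \<Longrightarrow> norm (x s) = 1"
    and "\<And>s. s < n \<Longrightarrow> y s \<in> {-1, 1}"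
    and "\<alpha> > 0"
    and "V1 = V0 - \<alpha> *\<^sub>R grad (loss n x y) V0"
    and "\<alpha> * loss n x y V0 \<le> 1 / (30 * real CARD('k))"
  shows "loss n x y V1 \<le> loss n x y V0 - 5 * \<alpha> * (norm (grad (loss n x y) V0))^2 / 6"
proof -
  define p L0 G N where "p = real CARD('k)" and "L0 = loss n x y V0"
    and "G = grad (loss n x y) V0" and "N = (norm G)^2"
  have labels: "\<And>s. s < n \<Longrightarrow> \<bar>y s\<bar> = 1" using assms(2) by fastforce
  have step: "V1 - V0 = - (\<alpha> *\<^sub>R G)" using assms(4) by (simp add: G_def)
  have rate: "0 \<le> \<alpha> * p * L0" "\<alpha> * p * L0 \<le> 1 / 30"
    using assms(3,5) by (simp_all add: L0_def p_def loss_nonneg field_simps)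
  then have "2 * p * (norm (V1 - V0))^2 \<le> 1"
    using gradient_step_admissible[OF assms(1) labels, where \<alpha> = \<alpha> and V = V0] assms(3)
    by (simp add: step p_def L0_def G_def)
  then have "loss n x y V1 \<le> L0 + G \<bullet> (V1 - V0) + 5 / 2 * p * L0 * (norm (V1 - V0))^2"
    using loss_quadratic_upper_bound[OF assms(1) labels] by (simp add: G_def L0_def p_def)
  also have "\<dots> = L0 - \<alpha> * N + 5 / 2 * (\<alpha> * p * L0) * (\<alpha> * N)"
    using assms(3)
    by (simp add: step N_def dot_square_norm power_mult_distrib power2_eq_square algebra_simps)
  also have "\<dots> \<le> L0 - \<alpha> * N + 5 / 2 * (1 / 30) * (\<alpha> * N)"
    using rate assms(3) by (intro add_left_mono mult_right_mono mult_left_mono) (simp_all add: N_def)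
  also have "\<dots> \<le> L0 - 5 * \<alpha> * N / 6"
    using assms(3) by (simp add: N_def)
  finally show ?thesis by (simp add: N_def G_def L0_def)
qed

end
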